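(* The intersection graph of any Sperner family is isomorphic to an induced subgraph of the difference graph $\mathcal{D}(G)$ for some cyclic group $G$ of squarefree order.
   Context: A Sperner family is a family $\mathcal{F}$ of subsets of a finite set $X$ such that for any two distinct $F_1,F_2\in\mathcal{F}$ we have $F_1\not\subseteq F_2$. The intersection graph of $\mathcal{F}$ has vertex set $\mathcal{F}$, two distinct members adjacent iff they intersect. For a finite group $G$ with identity $e$: the intersection power graph $\mathcal{G}_I(G)$ has vertex set $G$, two distinct non-identity vertices $x,y$ being adjacent iff $\langle x\rangle\cap\langle y\rangle\neq\{e\}$, and $e$ adjacent to every other vertex; the power graph $\mathcal{P}(G)$ has vertex set $G$, two distinct vertices adjacent iff one is a power of the other; the difference graph $\mathcal{D}(G)$ has edge set $E(\mathcal{G}_I(G))\setminus E(\mathcal{P}(G))$ on vertex set $G$, with all isolated vertices removed. *)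

theory Defs
  imports "HOL-Algebra.Elementary_Groups" "HOL-Computational_Algebra.Squarefree"
begin

definition sperner_family :: "'a set \<Rightarrow> 'a set set \<Rightarrow> bool" where
  "sperner_family X F \<longleftrightarrow> finite X \<and> (\<forall>A\<in>F. A \<subseteq> X) \<and>
     (\<forall>A\<in>F. \<forall>B\<in>F. A \<noteq> B \<longrightarrow> \<not> A \<subseteq> B)"

definition inter_graph_adj :: "'a set \<Rightarrow> 'a set \<Rightarrow> bool" where
  "inter_graph_adj A B \<longleftrightarrow> A \<noteq> B \<and> A \<inter> B \<noteq> {}"

definition ipg_adj :: "('g, 'b) monoid_scheme \<Rightarrow> 'g \<Rightarrow> 'g \<Rightarrow> bool" where
  "ipg_adj G x y \<longleftrightarrow> x \<in> carrier G \<and> y \<in> carrier G \<and> x \<noteq> y \<and>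
     (x = \<one>\<^bsub>G\<^esub> \<or> y = \<one>\<^bsub>G\<^esub> \<or>
      generate G {x} \<inter> generate G {y} \<noteq> {\<one>\<^bsub>G\<^esub>})"

definition pg_adj :: "('g, 'b) monoid_scheme \<Rightarrow> 'g \<Rightarrow> 'g \<Rightarrow> bool" where
  "pg_adj G x y \<longleftrightarrow> x \<in> carrier G \<and> y \<in> carrier G \<and> x \<noteq> y \<and>
     ((\<exists>n::nat. x = y [^]\<^bsub>G\<^esub> n) \<or> (\<exists>n::nat. y = x [^]\<^bsub>G\<^esub> n))"

definition diff_adj :: "('g, 'b) monoid_scheme \<Rightarrow> 'g \<Rightarrow> 'g \<Rightarrow> bool" where
  "diff_adj G x y \<longleftrightarrow> ipg_adj G x y \<and> \<not> pg_adj G x y"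

definition diff_vertices :: "('g, 'b) monoid_scheme \<Rightarrow> 'g set" where
  "diff_vertices G = {x \<in> carrier G. \<exists>y. diff_adj G x y}"

definition inter_graph_embeds_in_diff ::
  "'a set set \<Rightarrow> ('g, 'b) monoid_scheme \<Rightarrow> bool" where
  "inter_graph_embeds_in_diff F G \<longleftrightarrow>
     (\<exists>f. inj_on f F \<and> f ` F \<subseteq> diff_vertices G \<and>
        (\<forall>A\<in>F. \<forall>B\<in>F. inter_graph_adj A B \<longleftrightarrow> diff_adj G (f A) (f B)))"

end

theory Submission
  imports Defs
begin

text \<open>
  Let \<open>n\<close> be the product of a finite set \<open>P\<close> of primes. In \<open>\<int>/n\<close> the element
  \<open>x\<^sub>S = \<Prod>(P - S)\<close> generates the multiples of \<open>\<Prod>(P - S)\<close>; two such subgroups meet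
  in the multiples of \<open>lcm x\<^sub>S x\<^sub>R = \<Prod>(P - S \<inter> R)\<close>, which is nontrivial iff
  \<open>S \<inter> R \<noteq> {}\<close>, and \<open>x\<^sub>S\<close> is a power of \<open>x\<^sub>R\<close> iff \<open>S \<subseteq> R\<close>. Hence on nonempty \<open>S\<close>
  the difference graph is the overlap graph: \<open>S\<close> and \<open>R\<close> are adjacent iff they meet and
  neither contains the other. The intersection graph of any finite family of finite sets
  is an induced subgraph of an overlap graph: represent \<open>A\<close> by \<open>A \<union> {a\<^sub>A, b\<^sub>A}\<close> with fresh
  points, where the private point \<open>a\<^sub>A\<close> rules out containments and the fresh set \<open>{b\<^sub>A, c\<^sub>A}\<close> overlaps it, so that its vertex
  is not isolated in the difference graph.
\<close>

lemma prod_primes_dvd_iff: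
  fixes A :: "nat set"
  assumes "finite A" "\<forall>p\<in>A. prime p"
  shows "\<Prod>A dvd n \<longleftrightarrow> (\<forall>p\<in>A. p dvd n)"
  using assms
proof (induction A rule: finite_induct)
  case (insert p A)
  have "coprime p (\<Prod>A)"
    using insert by (intro prod_coprime_right) (auto intro: primes_coprime)
  with insert show ?case
    by (auto simp: divides_mult intro: dvd_mult_left dvd_mult_right)
qed simp

lemma prod_primes_dvd_prod_primes_iff:
  fixes A B :: "nat set"
  assumes "finite A" "finite B" "\<forall>p\<in>A. prime p" "\<forall>p\<in>B. prime p"
  shows "\<Prod>A dvd \<Prod>B \<longleftrightarrow> A \<subseteq> B"
  using assms prod_mset_dvd_prod_mset_primes_iff[of "mset_set A" "mset_set B"]
  by (simp add: prod_unfold_prod_mset)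

lemma lcm_prod_primes:
  fixes A B :: "nat set"
  assumes "finite A" "finite B" "\<forall>p\<in>A. prime p" "\<forall>p\<in>B. prime p"
  shows "lcm (\<Prod>A) (\<Prod>B) = \<Prod>(A \<union> B)"
proof (rule dvd_antisym)
  show "lcm (\<Prod>A) (\<Prod>B) dvd \<Prod>(A \<union> B)"
    using assms by (simp add: prod_dvd_prod_subset)
  have "p dvd lcm (\<Prod>A) (\<Prod>B)" if "p \<in> A \<union> B" for p
  proof -
    have "p dvd \<Prod>A \<or> p dvd \<Prod>B"
      using that assms by auto
    then show ?thesis
      by (meson dvd_lcm1 dvd_lcm2 dvd_trans)
  qed
  then show "\<Prod>(A \<union> B) dvd lcm (\<Prod>A) (\<Prod>B)"
    using assms by (subst prod_primes_dvd_iff) auto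
qed

lemma prod_primes_diff_less:
  fixes P :: "nat set"
  assumes "finite P" "\<forall>p\<in>P. prime p" "S \<subseteq> P" "S \<noteq> {}"
  shows "\<Prod>(P - S) < \<Prod>P"
proof -
  have "\<Prod>P > 0"
    using assms by (simp add: prime_gt_0_nat prod_pos)
  then have "\<Prod>(P - S) \<le> \<Prod>P"
    using assms by (intro dvd_imp_le prod_dvd_prod_subset) auto
  moreover have "\<not> \<Prod>P dvd \<Prod>(P - S)"
    using assms by (auto simp: prod_primes_dvd_prod_primes_iff)
  ultimately show ?thesis
    by (metis dvd_refl le_neq_implies_less)
qed

lemma order_integer_mod_group: "order (integer_mod_group n) = n"
  by (simp add: order_def carrier_integer_mod_group)

lemma carrier_integer_mod_group_range: "carrier (integer_mod_group n) = range (\<lambda>k. k mod int n)"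
proof (cases "n = 0")
  case False
  show ?thesis
  proof (intro equalityI subsetI)
    fix z assume "z \<in> carrier (integer_mod_group n)"
    with False have "z = z mod int n"
      by (simp add: carrier_integer_mod_group)
    then show "z \<in> range (\<lambda>k. k mod int n)"
      by (rule range_eqI)
  qed (use False in \<open>auto simp: carrier_integer_mod_group\<close>)
qed (simp add: carrier_integer_mod_group)

lemma cyclic_integer_mod_group: "cyclic_group (integer_mod_group n)"
proof -
  have "carrier (integer_mod_group n) = range (\<lambda>k::int. (1 mod int n) [^]\<^bsub>integer_mod_group n\<^esub> k)"
    by (simp add: carrier_integer_mod_group_range int_pow_integer_mod_group mod_mult_right_eq)
  moreover have "1 mod int n \<in> carrier (integer_mod_group n)"
    by (simp add: carrier_integer_mod_group_range)
  ultimately show ?thesis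
    using group.cyclic_group[OF group_integer_mod_group] by blast
qed

lemma generate_integer_mod_group_divisor:
  assumes "d dvd n" "d < n"
  shows "generate (integer_mod_group n) {int d} = {z. 0 \<le> z \<and> z < int n \<and> int d dvd z}"
proof -
  have "int d \<in> carrier (integer_mod_group n)"
    using assms by (simp add: carrier_integer_mod_group)
  then have "generate (integer_mod_group n) {int d} = range (\<lambda>k. (k * int d) mod int n)"
    by (auto simp: group.generate_pow int_pow_integer_mod_group)
  also have "\<dots> = {z. 0 \<le> z \<and> z < int n \<and> int d dvd z}"
  proof (intro equalityI subsetI)
    fix z assume "z \<in> range (\<lambda>k. (k * int d) mod int n)"
    with assms show "z \<in> {z. 0 \<le> z \<and> z < int n \<and> int d dvd z}"
      by (auto simp: dvd_mod_iff)
  next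
    fix z assume "z \<in> {z. 0 \<le> z \<and> z < int n \<and> int d dvd z}"
    then have "z = (z div int d * int d) mod int n"
      by simp
    then show "z \<in> range (\<lambda>k. (k * int d) mod int n)"
      by blast
  qed
  finally show ?thesis .
qed

lemma integer_mod_group_divisor_pow_iff:
  assumes "e dvd n" "d < n"
  shows "(\<exists>m::nat. int d = int e [^]\<^bsub>integer_mod_group n\<^esub> m) \<longleftrightarrow> e dvd d"
proof
  assume "\<exists>m::nat. int d = int e [^]\<^bsub>integer_mod_group n\<^esub> m"
  then obtain m where "int d = (int m * int e) mod int n"
    by auto
  with assms show "e dvd d"
    by (metis dvd_mod_iff dvd_triv_right int_dvd_int_iff of_nat_dvd_iff)
next
  assume "e dvd d"
  then obtain m where "d = e * m" ..
  with \<open>d < n\<close> have "int d = (int m * int e) mod int n"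
    by (simp add: mult.commute flip: of_nat_mult)
  then show "\<exists>m::nat. int d = int e [^]\<^bsub>integer_mod_group n\<^esub> m"
    by auto
qed

lemma generate_integer_mod_group_divisors_Int:
  assumes "d dvd n" "e dvd n" "d < n" "e < n"
  shows "generate (integer_mod_group n) {int d} \<inter> generate (integer_mod_group n) {int e} \<noteq> {0}
    \<longleftrightarrow> lcm d e \<noteq> n"
proof -
  have Int_eq: "generate (integer_mod_group n) {int d} \<inter> generate (integer_mod_group n) {int e}
      = {z. 0 \<le> z \<and> z < int n \<and> int (lcm d e) dvd z}"
    using assms by (auto simp: generate_integer_mod_group_divisor simp flip: lcm_int_int_eq)
  have "d > 0" "e > 0"
    using assms dvd_pos_nat[of n] by auto
  then have "lcm d e \<le> n" "lcm d e > 0"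
    using assms by (auto simp: lcm_pos_nat dvd_imp_le)
  show ?thesis
  proof
    assume "generate (integer_mod_group n) {int d} \<inter> generate (integer_mod_group n) {int e} \<noteq> {0}"
    moreover have "0 \<in> {z. 0 \<le> z \<and> z < int n \<and> int (lcm d e) dvd z}"
      using \<open>lcm d e \<le> n\<close> \<open>lcm d e > 0\<close> by simp
    ultimately obtain z where "0 \<le> z" "z \<noteq> 0" "z < int n" "int (lcm d e) dvd z"
      unfolding Int_eq by blast
    then show "lcm d e \<noteq> n"
      using zdvd_not_zless by fastforce
  next
    assume "lcm d e \<noteq> n"
    with \<open>lcm d e \<le> n\<close> \<open>d > 0\<close> \<open>e > 0\<close>
    have "int (lcm d e) \<in> {z. 0 \<le> z \<and> z < int n \<and> int (lcm d e) dvd z} - {0}"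
      by simp
    then show "generate (integer_mod_group n) {int d} \<inter> generate (integer_mod_group n) {int e} \<noteq> {0}"
      unfolding Int_eq by blast
  qed
qed

lemma diff_adj_integer_mod_group_divisors:
  assumes "d dvd n" "e dvd n" "d < n" "e < n"
  shows "diff_adj (integer_mod_group n) (int d) (int e) \<longleftrightarrow> lcm d e \<noteq> n \<and> \<not> d dvd e \<and> \<not> e dvd d"
proof -
  have "d > 0" "e > 0"
    using assms dvd_pos_nat[of n] by auto
  moreover have "(\<exists>m::nat. int d = int e [^]\<^bsub>integer_mod_group n\<^esub> m) \<longleftrightarrow> e dvd d"
    "(\<exists>m::nat. int e = int d [^]\<^bsub>integer_mod_group n\<^esub> m) \<longleftrightarrow> d dvd e"
    using assms by (simp_all only: integer_mod_group_divisor_pow_iff)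
  ultimately show ?thesis
    using assms unfolding diff_adj_def ipg_adj_def pg_adj_def
    by (auto simp: carrier_integer_mod_group generate_integer_mod_group_divisors_Int
        simp del: pow_integer_mod_group)
qed

definition overlapping :: "'a set \<Rightarrow> 'a set \<Rightarrow> bool" where
  "overlapping S R \<longleftrightarrow> S \<inter> R \<noteq> {} \<and> \<not> S \<subseteq> R \<and> \<not> R \<subseteq> S"

lemma overlapping_nonempty: "overlapping S R \<Longrightarrow> S \<noteq> {} \<and> R \<noteq> {}"
  by (auto simp: overlapping_def)

lemma diff_adj_integer_mod_group_prod_primes:
  fixes P :: "nat set"
  assumes P: "finite P" "\<forall>p\<in>P. prime p"
    and S: "S \<subseteq> P" "S \<noteq> {}" and R: "R \<subseteq> P" "R \<noteq> {}"
  shows "diff_adj (integer_mod_group (\<Prod>P)) (int (\<Prod>(P - S))) (int (\<Prod>(P - R)))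
    \<longleftrightarrow> overlapping S R"
proof -
  have "lcm (\<Prod>(P - S)) (\<Prod>(P - R)) = \<Prod>(P - S \<inter> R)"
    using P by (simp add: lcm_prod_primes Diff_Int)
  also have "\<dots> \<noteq> \<Prod>P \<longleftrightarrow> S \<inter> R \<noteq> {}"
  proof -
    have "\<Prod>(P - S \<inter> R) < \<Prod>P" if "S \<inter> R \<noteq> {}"
      using P S that by (intro prod_primes_diff_less) auto
    then show ?thesis
      by fastforce
  qed
  finally have "lcm (\<Prod>(P - S)) (\<Prod>(P - R)) \<noteq> \<Prod>P \<longleftrightarrow> S \<inter> R \<noteq> {}" .
  moreover have "\<Prod>(P - S) dvd \<Prod>(P - R) \<longleftrightarrow> R \<subseteq> S" "\<Prod>(P - R) dvd \<Prod>(P - S) \<longleftrightarrow> S \<subseteq> R"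
    using P S R by (auto simp: prod_primes_dvd_prod_primes_iff)
  moreover have "diff_adj (integer_mod_group (\<Prod>P)) (int (\<Prod>(P - S))) (int (\<Prod>(P - R)))
    \<longleftrightarrow> lcm (\<Prod>(P - S)) (\<Prod>(P - R)) \<noteq> \<Prod>P
      \<and> \<not> \<Prod>(P - S) dvd \<Prod>(P - R) \<and> \<not> \<Prod>(P - R) dvd \<Prod>(P - S)"
    using P S R
    by (intro diff_adj_integer_mod_group_divisors) (auto simp: prod_dvd_prod_subset prod_primes_diff_less)
  ultimately show ?thesis
    unfolding overlapping_def by blast
qed

lemma overlapping_image_iff:
  assumes "inj_on \<pi> T" "S \<subseteq> T" "R \<subseteq> T"
  shows "overlapping (\<pi> ` S) (\<pi> ` R) \<longleftrightarrow> overlapping S R"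
  using assms unfolding overlapping_def inj_on_def by blast

definition overlap_representation :: "'b set \<Rightarrow> 'a set set \<Rightarrow> ('a set \<Rightarrow> 'b set) \<Rightarrow> bool" where
  "overlap_representation T F \<sigma> \<longleftrightarrow> finite T \<and> inj_on \<sigma> F \<and>
     (\<forall>A\<in>F. \<sigma> A \<subseteq> T \<and> (\<exists>R\<subseteq>T. overlapping (\<sigma> A) R)) \<and>
     (\<forall>A\<in>F. \<forall>B\<in>F. inter_graph_adj A B \<longleftrightarrow> overlapping (\<sigma> A) (\<sigma> B))"

lemma overlap_representation_image:
  assumes rep: "overlap_representation T F \<sigma>" and \<pi>: "inj_on \<pi> T"
  shows "overlap_representation (\<pi> ` T) F (\<lambda>A. \<pi> ` \<sigma> A)"
proof -
  have inj: "inj_on \<sigma> F"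
    using rep by (simp add: overlap_representation_def)
  have sub: "\<sigma> A \<subseteq> T" if "A \<in> F" for A
    using rep that by (simp add: overlap_representation_def)
  have "inj_on (\<lambda>A. \<pi> ` \<sigma> A) F"
  proof (rule inj_onI)
    fix A B assume "A \<in> F" "B \<in> F" "\<pi> ` \<sigma> A = \<pi> ` \<sigma> B"
    then have "\<sigma> A = \<sigma> B"
      using sub by (simp add: inj_on_image_eq_iff[OF \<pi>])
    with \<open>A \<in> F\<close> \<open>B \<in> F\<close> show "A = B"
      using inj_onD[OF inj] by blast
  qed
  moreover have "\<exists>R'\<subseteq>\<pi> ` T. overlapping (\<pi> ` \<sigma> A) R'" if "A \<in> F" for A
  proof -
    have "\<exists>R\<subseteq>T. overlapping (\<sigma> A) R"
      using rep that by (simp add: overlap_representation_def)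
    then obtain R where R: "R \<subseteq> T" "overlapping (\<sigma> A) R"
      by blast
    then have "\<pi> ` R \<subseteq> \<pi> ` T"
      by (simp add: image_mono)
    then show ?thesis
      using R overlapping_image_iff[OF \<pi> sub[OF that] R(1)] by blast
  qed
  moreover have "\<pi> ` \<sigma> A \<subseteq> \<pi> ` T" if "A \<in> F" for A
    using sub[OF that] by (rule image_mono)
  moreover have "inter_graph_adj A B \<longleftrightarrow> overlapping (\<pi> ` \<sigma> A) (\<pi> ` \<sigma> B)"
    if "A \<in> F" "B \<in> F" for A B
    using rep that overlapping_image_iff[OF \<pi> sub[OF that(1)] sub[OF that(2)]]
    by (simp add: overlap_representation_def)
  moreover have "finite (\<pi> ` T)"
    using rep by (simp add: overlap_representation_def)
  ultimately show ?thesis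
    unfolding overlap_representation_def by blast
qed

lemma overlap_representation_exists:
  fixes X :: "'a set" and F :: "'a set set"
  assumes "finite X" "\<forall>A\<in>F. A \<subseteq> X"
  shows "\<exists>T \<sigma>. overlap_representation (T :: ('a + 'a set \<times> nat) set) F \<sigma>"
proof -
  define T :: "('a + 'a set \<times> nat) set" where "T = Inl ` X \<union> Inr ` (F \<times> {0, 1, 2})"
  define \<sigma> :: "'a set \<Rightarrow> ('a + 'a set \<times> nat) set"
    where "\<sigma> A = Inl ` A \<union> {Inr (A, 0), Inr (A, 1)}" for A
  define partner :: "'a set \<Rightarrow> ('a + 'a set \<times> nat) set"
    where "partner A = {Inr (A, 1), Inr (A, 2)}" for A
  have fresh: "Inr (A, 0) \<in> \<sigma> A - \<sigma> B" if "A \<noteq> B" for A B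
    using that by (auto simp: \<sigma>_def)
  have "finite F"
    using assms by (meson Pow_iff finite_Pow_iff finite_subset subsetI)
  then have "finite T"
    using assms by (simp add: T_def)
  moreover have "inj_on \<sigma> F"
    by (rule inj_onI) (use fresh in blast)
  moreover have "\<sigma> A \<subseteq> T \<and> (\<exists>R\<subseteq>T. overlapping (\<sigma> A) R)" if "A \<in> F" for A
  proof -
    have "partner A \<subseteq> T" "overlapping (\<sigma> A) (partner A)"
      using that by (auto simp: T_def \<sigma>_def partner_def overlapping_def)
    moreover have "\<sigma> A \<subseteq> T"
      using assms that by (auto simp: T_def \<sigma>_def)
    ultimately show ?thesis
      by blast
  qed
  moreover have "inter_graph_adj A B \<longleftrightarrow> overlapping (\<sigma> A) (\<sigma> B)" for A B
  proof (cases "A = B")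
    case False
    then have "\<sigma> A \<inter> \<sigma> B = Inl ` (A \<inter> B)"
      by (auto simp: \<sigma>_def)
    with False show ?thesis
      using fresh[of A B] fresh[of B A] by (auto simp: inter_graph_adj_def overlapping_def)
  qed (simp add: inter_graph_adj_def overlapping_def)
  ultimately have "overlap_representation T F \<sigma>"
    unfolding overlap_representation_def by blast
  then show ?thesis
    by blast
qed

lemma inter_graph_embeds_in_diff_integer_mod_group:
  assumes rep: "overlap_representation P F \<sigma>" and P: "\<forall>p\<in>P. prime p"
  shows "inter_graph_embeds_in_diff F (integer_mod_group (\<Prod>P))"
proof -
  define x :: "nat set \<Rightarrow> int" where "x S = int (\<Prod>(P - S))" for S
  have fin: "finite P" and inj: "inj_on \<sigma> F"
    using rep by (simp_all add: overlap_representation_def)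
  have \<sigma>: "\<sigma> A \<subseteq> P" "\<exists>R\<subseteq>P. overlapping (\<sigma> A) R" if "A \<in> F" for A
    using rep that by (simp_all add: overlap_representation_def)
  have \<sigma>_nonempty: "\<sigma> A \<noteq> {}" if "A \<in> F" for A
    using \<sigma>(2)[OF that] overlapping_nonempty by blast
  have diff_adj_x: "diff_adj (integer_mod_group (\<Prod>P)) (x S) (x R) \<longleftrightarrow> overlapping S R"
    if "S \<subseteq> P" "S \<noteq> {}" "R \<subseteq> P" "R \<noteq> {}" for S R
    unfolding x_def using fin P that by (rule diff_adj_integer_mod_group_prod_primes)
  have x_eq_iff: "x S = x R \<longleftrightarrow> S = R" if "S \<subseteq> P" "R \<subseteq> P" for S R
  proof
    assume "x S = x R"
    then have "\<Prod>(P - S) = \<Prod>(P - R)"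
      by (simp only: x_def of_nat_eq_iff)
    then have "P - S = P - R"
      using fin P prod_primes_dvd_prod_primes_iff[of "P - S" "P - R"]
        prod_primes_dvd_prod_primes_iff[of "P - R" "P - S"] by auto
    with that show "S = R"
      by blast
  qed simp
  have "x (\<sigma> A) \<in> diff_vertices (integer_mod_group (\<Prod>P))" if A: "A \<in> F" for A
  proof -
    obtain R where R: "R \<subseteq> P" "overlapping (\<sigma> A) R"
      using \<sigma>(2)[OF A] by blast
    then have "diff_adj (integer_mod_group (\<Prod>P)) (x (\<sigma> A)) (x R)"
      using diff_adj_x[OF \<sigma>(1)[OF A] \<sigma>_nonempty[OF A] R(1)] overlapping_nonempty by blast
    moreover have "x (\<sigma> A) \<in> carrier (integer_mod_group (\<Prod>P))"
      using fin P \<sigma>(1)[OF A] \<sigma>_nonempty[OF A] prod_primes_diff_less[of P "\<sigma> A"]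
      by (simp add: x_def carrier_integer_mod_group del: of_nat_prod)
    ultimately show ?thesis
      by (auto simp: diff_vertices_def)
  qed
  moreover have "inj_on (\<lambda>A. x (\<sigma> A)) F"
    using inj \<sigma>(1) x_eq_iff by (simp add: inj_on_def)
  moreover have "inter_graph_adj A B \<longleftrightarrow> diff_adj (integer_mod_group (\<Prod>P)) (x (\<sigma> A)) (x (\<sigma> B))"
    if "A \<in> F" "B \<in> F" for A B
  proof -
    have "inter_graph_adj A B \<longleftrightarrow> overlapping (\<sigma> A) (\<sigma> B)"
      using rep that by (simp add: overlap_representation_def)
    also have "\<dots> \<longleftrightarrow> diff_adj (integer_mod_group (\<Prod>P)) (x (\<sigma> A)) (x (\<sigma> B))"
      using that by (simp add: diff_adj_x \<sigma>(1) \<sigma>_nonempty)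
    finally show ?thesis .
  qed
  ultimately show ?thesis
    unfolding inter_graph_embeds_in_diff_def by blast
qed

lemma finite_inj_on_into_infinite:
  assumes "finite A" "infinite B"
  obtains f where "inj_on f A" "f ` A \<subseteq> B"
proof -
  obtain g :: "nat \<Rightarrow> 'b" where "inj g" "range g \<subseteq> B"
    using infinite_countable_subset[OF assms(2)] by blast
  moreover obtain h :: "'a \<Rightarrow> nat" where "inj_on h A"
    using finite_imp_inj_to_nat_seg[OF assms(1)] by blast
  ultimately show ?thesis
    using that[of "g \<circ> h"] by (auto simp: comp_inj_on inj_on_subset)
qed

theorem proposition3p10:
  fixes X :: "'a set" and F :: "'a set set"
  assumes "sperner_family X F"
  shows "\<exists>G :: int monoid. group G \<and> cyclic_group G \<and> finite (carrier G) \<and>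
           squarefree (order G) \<and> inter_graph_embeds_in_diff F G"
proof -
  have "finite X" "\<forall>A\<in>F. A \<subseteq> X"
    using assms by (simp_all add: sperner_family_def)
  then obtain T :: "('a + 'a set \<times> nat) set" and \<sigma> where rep: "overlap_representation T F \<sigma>"
    using overlap_representation_exists by blast
  then have "finite T"
    by (simp add: overlap_representation_def)
  then obtain \<pi> :: "_ \<Rightarrow> nat" where \<pi>: "inj_on \<pi> T" "\<pi> ` T \<subseteq> {p. prime p}"
    using finite_inj_on_into_infinite primes_infinite by blast
  define P where "P = \<pi> ` T"
  have rep_P: "overlap_representation P F (\<lambda>A. \<pi> ` \<sigma> A)"
    unfolding P_def using rep \<pi>(1) by (rule overlap_representation_image)
  have P: "finite P" "\<forall>p\<in>P. prime p"
    using \<open>finite T\<close> \<pi>(2) by (auto simp: P_def)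
  then have "\<Prod>P > 0"
    by (simp add: prime_gt_0_nat prod_pos)
  moreover have "squarefree (\<Prod>P)"
    using P by (metis primes_coprime squarefree_prime squarefree_prod_coprime)
  ultimately show ?thesis
    using inter_graph_embeds_in_diff_integer_mod_group[OF rep_P P(2)]
    by (intro exI[of _ "integer_mod_group (\<Prod>P)"])
      (simp add: cyclic_integer_mod_group order_integer_mod_group carrier_integer_mod_group)
qed

end
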